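(* Let $n\in\mathbb{N}$, let $p$ be a prime and let $d,k,m\in\mathbb{N}$. Consider the system of equations \[ F_1(x_1,\ldots,x_m)=\cdots=F_k(x_1,\ldots,x_m)=0, \] where each $F_i$ is a homogeneous polynomial of degree $d$ with coefficients in $\mathbb{Z}/p^n\mathbb{Z}$. For every non-negative integer $h$ (and every $n'$), let $S(n',h)$ denote the set of solutions $(x_1,\ldots,x_m)\in(\mathbb{Z}/p^{n'}\mathbb{Z})^m$ of the system (with coefficients reduced modulo $p^{n'}$) satisfying $\min\{\nu_p(x_1),\ldots,\nu_p(x_m)\}=h$. If $0\le h<n/d$, then \[ |S(n,h)| = p^{(d-1)hm}\,|S(n-dh,0)|. \]
   Context: For a prime $p$ and $n\in\mathbb{N}$, the $p$-adic valuation $\nu_p:\mathbb{Z}/p^n\mathbb{Z}\to\{0,1,\ldots,n\}$ is defined by $\nu_p(y+p^n\mathbb{Z})=\nu_p(y)$ (the largest $j\ge 0$ with $p^j\mid y$) if $p^n\nmid y$, and $\nu_p(y+p^n\mathbb{Z})=n$ if $p^n\mid y$. *)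

theory Defs
  imports Complex_Main "HOL-Computational_Algebra.Primes"
begin

definition hmonos :: "nat \<Rightarrow> nat \<Rightarrow> (nat \<Rightarrow> nat) set" where
  "hmonos m d = {e. (\<forall>j\<ge>m. e j = 0) \<and> (\<Sum>j<m. e j) = d}"

(* A homogeneous polynomial of degree d in m variables is given by its coefficient
  function c on exponent vectors (integer representatives of residues); evaluation: *)
definition hpoly_eval :: "nat \<Rightarrow> nat \<Rightarrow> ((nat \<Rightarrow> nat) \<Rightarrow> int) \<Rightarrow> (nat \<Rightarrow> int) \<Rightarrow> int" where
  "hpoly_eval m d c x = (\<Sum>e\<in>hmonos m d. c e * (\<Prod>j<m. x j ^ e j))"

(* p-adic valuation on Z/p^n Z, evaluated on an integer representative. *)
definition padic_val_mod :: "nat \<Rightarrow> nat \<Rightarrow> int \<Rightarrow> nat" where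
  "padic_val_mod p n y = (if int p ^ n dvd y then n else multiplicity (int p) y)"

(* S(n',h): solutions in (Z/p^n' Z)^m (represented by x_j in {0..<p^n'}) of the system
  F_1 = ... = F_k = 0 reduced mod p^n', with minimal valuation h. *)
definition sol_set :: "nat \<Rightarrow> nat \<Rightarrow> nat \<Rightarrow> nat \<Rightarrow> (nat \<Rightarrow> (nat \<Rightarrow> nat) \<Rightarrow> int) \<Rightarrow> nat \<Rightarrow> nat
    \<Rightarrow> (nat \<Rightarrow> int) set" where
  "sol_set p m d k F n' h = {x.
     (\<forall>j<m. x j \<in> {0..<int p ^ n'}) \<and> (\<forall>j\<ge>m. x j = 0) \<and>
     (\<forall>i<k. int p ^ n' dvd hpoly_eval m d (F i) x) \<and>
     Min ((\<lambda>j. padic_val_mod p n' (x j)) ` {..<m}) = h}"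

end

theory Submission
  imports Defs "HOL-Number_Theory.Cong" "HOL-Library.FuncSet"
begin

text \<open>If x has minimal valuation h, then x = p^h z with z primitive, and by homogeneity
  p^n divides F(x) = p^(dh) F(z) iff p^(n-dh) divides F(z). Both this condition and primitivity of z
  only depend on z modulo p^(n-dh), whereas z itself is determined modulo p^(n-h); so every primitive
  solution modulo p^(n-dh) has exactly p^((d-1)h) lifts in each of the m coordinates.\<close>

definition residue_vecs :: "nat \<Rightarrow> int \<Rightarrow> (nat \<Rightarrow> int) set" where
  "residue_vecs m M = {x. (\<forall>j<m. x j \<in> {0..<M}) \<and> (\<forall>j\<ge>m. x j = 0)}"

lemma mem_sol_set_iff:
  "x \<in> sol_set p m d k F n h \<longleftrightarrow> x \<in> residue_vecs m (int p ^ n) \<and>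
    (\<forall>i<k. int p ^ n dvd hpoly_eval m d (F i) x) \<and> Min ((\<lambda>j. padic_val_mod p n (x j)) ` {..<m}) = h"
  by (auto simp: sol_set_def residue_vecs_def)

lemma card_residue_vecs_mult:
  fixes M :: int and Q :: nat
  assumes "M > 0"
    and periodic: "\<And>x y. (\<And>j. j < m \<Longrightarrow> [x j = y j] (mod M)) \<Longrightarrow> P x \<longleftrightarrow> P y"
  shows "card {x \<in> residue_vecs m (M * int Q). P x} = Q ^ m * card {y \<in> residue_vecs m M. P y}"
proof -
  define T where "T = PiE {..<m} (\<lambda>_. {0..<int Q})"
  define lift where "lift = (\<lambda>(y, t) j. if j < m then y j + M * t j else (0::int))"
  define split where "split = (\<lambda>x. (\<lambda>j. x j mod M, restrict (\<lambda>j. x j div M) {..<m}))"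
  have digit_bound: "y + M * t < M * int Q" if "y < M" "t < int Q" for y t
  proof -
    have "y + M * t < M * (t + 1)" using that by (simp add: algebra_simps)
    also have "\<dots> \<le> M * int Q" using that assms(1) by (intro mult_left_mono) auto
    finally show ?thesis .
  qed
  have quotient_range: "0 \<le> x div M \<and> x div M < int Q" if "0 \<le> x" "x < M * int Q" for x
  proof -
    have "M * (x div M) < M * int Q"
      using that mult_div_mod_eq[of M x] pos_mod_sign[OF assms(1), of x] by linarith
    then show ?thesis
      using that assms(1) by (simp add: pos_imp_zdiv_nonneg_iff)
  qed
  have "bij_betw lift ({y \<in> residue_vecs m M. P y} \<times> T) {x \<in> residue_vecs m (M * int Q). P x}"
  proof (rule bij_betw_byWitness[where f' = split])
    show "\<forall>a\<in>{y \<in> residue_vecs m M. P y} \<times> T. split (lift a) = a"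
      using assms(1) by (auto simp: residue_vecs_def T_def lift_def split_def PiE_def extensional_def fun_eq_iff)
    show "\<forall>x\<in>{x \<in> residue_vecs m (M * int Q). P x}. lift (split x) = x"
      by (auto simp: residue_vecs_def lift_def split_def fun_eq_iff)
    show "lift ` ({y \<in> residue_vecs m M. P y} \<times> T) \<subseteq> {x \<in> residue_vecs m (M * int Q). P x}"
    proof (rule image_subsetI)
      fix a assume "a \<in> {y \<in> residue_vecs m M. P y} \<times> T"
      then obtain y t where a: "a = (y, t)" and y: "y \<in> residue_vecs m M" "P y" and t: "t \<in> T"
        by blast
      have "P (lift (y, t))"
        using y(2) by (subst periodic[of _ y]) (auto simp: lift_def cong_def)
      then show "lift a \<in> {x \<in> residue_vecs m (M * int Q). P x}"
        using a y t by (auto simp: residue_vecs_def lift_def T_def PiE_iff intro!: digit_bound)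
    qed
    show "split ` {x \<in> residue_vecs m (M * int Q). P x} \<subseteq> {y \<in> residue_vecs m M. P y} \<times> T"
    proof (rule image_subsetI)
      fix x assume "x \<in> {x \<in> residue_vecs m (M * int Q). P x}"
      then have x: "x \<in> residue_vecs m (M * int Q)" "P x" by simp_all
      have "P (\<lambda>j. x j mod M)"
        using x(2) by (subst periodic[of _ x]) (auto simp: cong_def)
      then show "split x \<in> {y \<in> residue_vecs m M. P y} \<times> T"
        using x(1) assms(1) quotient_range by (auto simp: residue_vecs_def split_def T_def)
    qed
  qed
  then have "card {x \<in> residue_vecs m (M * int Q). P x} = card ({y \<in> residue_vecs m M. P y} \<times> T)"
    by (simp add: bij_betw_same_card)
  also have "\<dots> = card {y \<in> residue_vecs m M. P y} * Q ^ m"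
    by (simp add: card_cartesian_product T_def card_PiE)
  finally show ?thesis by simp
qed

lemma hpoly_eval_scale:
  "hpoly_eval m d c (\<lambda>j. a * x j) = a ^ d * hpoly_eval m d c x"
proof -
  have "(\<Prod>j<m. (a * x j) ^ e j) = a ^ d * (\<Prod>j<m. x j ^ e j)" if "e \<in> hmonos m d" for e
  proof -
    have "(\<Prod>j<m. (a * x j) ^ e j) = (\<Prod>j<m. a ^ e j) * (\<Prod>j<m. x j ^ e j)"
      by (simp add: power_mult_distrib prod.distrib)
    also have "(\<Prod>j<m. a ^ e j) = a ^ d"
      using that by (simp add: hmonos_def flip: power_sum)
    finally show ?thesis .
  qed
  then show ?thesis
    unfolding hpoly_eval_def sum_distrib_left by (intro sum.cong) (simp_all add: algebra_simps)
qed

lemma hpoly_eval_cong: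
  assumes "\<And>j. j < m \<Longrightarrow> [x j = y j] (mod M)"
  shows "[hpoly_eval m d c x = hpoly_eval m d c y] (mod M)"
  unfolding hpoly_eval_def
  by (intro cong_sum cong_mult cong_refl cong_prod cong_pow assms) auto

lemma padic_val_mod_ge_iff:
  assumes "prime p" "0 \<le> y" "y < int p ^ n" "h \<le> n"
  shows "h \<le> padic_val_mod p n y \<longleftrightarrow> int p ^ h dvd y"
proof (cases "y = 0")
  case True
  then show ?thesis using assms(4) by (simp add: padic_val_mod_def)
next
  case False
  then have "\<not> int p ^ n dvd y"
    using assms(2,3) zdvd_imp_le by fastforce
  moreover have "\<not> is_unit (int p)"
    using assms(1) prime_int_iff by auto
  ultimately show ?thesis
    using False by (simp add: padic_val_mod_def power_dvd_iff_le_multiplicity)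
qed

lemma Min_padic_val_mod_eq_iff:
  assumes "prime p" "m \<ge> 1" "h < n" "x \<in> residue_vecs m (int p ^ n)"
  shows "Min ((\<lambda>j. padic_val_mod p n (x j)) ` {..<m}) = h \<longleftrightarrow>
    (\<forall>j<m. int p ^ h dvd x j) \<and> (\<exists>j<m. \<not> int p ^ Suc h dvd x j)"
proof -
  let ?v = "\<lambda>j. padic_val_mod p n (x j)"
  have "?v ` {..<m} \<noteq> {}" using assms(2) by (simp add: lessThan_empty_iff)
  then have "Min (?v ` {..<m}) = h \<longleftrightarrow> (\<forall>j<m. h \<le> ?v j) \<and> (\<exists>j<m. \<not> Suc h \<le> ?v j)"
    by (auto simp: Min_eq_iff not_less_eq_eq intro: le_antisym)
  moreover have "l \<le> ?v j \<longleftrightarrow> int p ^ l dvd x j" if "j < m" "l \<le> n" for j l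
    using assms(1,4) that by (intro padic_val_mod_ge_iff) (auto simp: residue_vecs_def)
  then have "\<forall>j<m. h \<le> ?v j \<longleftrightarrow> int p ^ h dvd x j" "\<forall>j<m. Suc h \<le> ?v j \<longleftrightarrow> int p ^ Suc h dvd x j"
    using assms(3) by simp_all
  ultimately show ?thesis
    by auto
qed

definition primitive_solution ::
    "nat \<Rightarrow> nat \<Rightarrow> nat \<Rightarrow> nat \<Rightarrow> (nat \<Rightarrow> (nat \<Rightarrow> nat) \<Rightarrow> int) \<Rightarrow> nat \<Rightarrow> (nat \<Rightarrow> int) \<Rightarrow> bool" where
  "primitive_solution p m d k F N z \<longleftrightarrow>
     (\<forall>i<k. int p ^ N dvd hpoly_eval m d (F i) z) \<and> (\<exists>j<m. \<not> int p dvd z j)"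

lemma primitive_solution_cong:
  assumes "N \<ge> 1" and "\<And>j. j < m \<Longrightarrow> [x j = y j] (mod int p ^ N)"
  shows "primitive_solution p m d k F N x \<longleftrightarrow> primitive_solution p m d k F N y"
proof -
  have "int p dvd int p ^ N" using assms(1) by (simp add: dvd_power)
  then have "int p dvd x j \<longleftrightarrow> int p dvd y j" if "j < m" for j
    using assms(2)[OF that] cong_dvd_iff cong_dvd_modulus by blast
  moreover have "int p ^ N dvd hpoly_eval m d c x \<longleftrightarrow> int p ^ N dvd hpoly_eval m d c y" for c
    by (rule cong_dvd_iff, rule hpoly_eval_cong, rule assms(2))
  ultimately show ?thesis
    unfolding primitive_solution_def by auto
qed

lemma scaled_mem_sol_set_iff:
  assumes "prime p" "m \<ge> 1" "h < n" "d * h \<le> n"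
  shows "(\<lambda>j. int p ^ h * z j) \<in> sol_set p m d k F n h \<longleftrightarrow>
    z \<in> residue_vecs m (int p ^ (n - h)) \<and> primitive_solution p m d k F (n - d * h) z"
proof -
  define x where "x = (\<lambda>j. int p ^ h * z j)"
  have p_pos: "int p > 0" using assms(1) prime_gt_0_nat by auto
  then have p_pow_pos: "int p ^ h > 0" by simp
  have scale: "0 \<le> q * a \<longleftrightarrow> 0 \<le> a" "q * a < q * b \<longleftrightarrow> a < b" "q * a = 0 \<longleftrightarrow> a = 0"
    if "q > 0" for q a b :: int
    using that by (simp_all add: zero_le_mult_iff)
  have "int p ^ n = int p ^ h * int p ^ (n - h)"
    using assms(3) by (simp flip: power_add)
  then have range: "x \<in> residue_vecs m (int p ^ n) \<longleftrightarrow> z \<in> residue_vecs m (int p ^ (n - h))"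
    by (simp only: x_def residue_vecs_def mem_Collect_eq atLeastLessThan_iff scale[OF p_pow_pos])
  have "int p ^ n = int p ^ (d * h) * int p ^ (n - d * h)"
    using assms(4) by (simp flip: power_add)
  moreover have "hpoly_eval m d c x = int p ^ (d * h) * hpoly_eval m d c z" for c
    unfolding x_def hpoly_eval_scale by (simp add: mult.commute flip: power_mult)
  ultimately have equations: "int p ^ n dvd hpoly_eval m d c x \<longleftrightarrow>
      int p ^ (n - d * h) dvd hpoly_eval m d c z" for c
    using p_pos by simp
  have valuation: "Min ((\<lambda>j. padic_val_mod p n (x j)) ` {..<m}) = h \<longleftrightarrow> (\<exists>j<m. \<not> int p dvd z j)"
    if "x \<in> residue_vecs m (int p ^ n)"
    using Min_padic_val_mod_eq_iff[OF assms(1-3) that] p_pos by (simp add: x_def)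
  show ?thesis
    unfolding x_def[symmetric] mem_sol_set_iff primitive_solution_def
    using range equations valuation by blast
qed

lemma bij_betw_scale_sol_set:
  assumes "prime p" "m \<ge> 1" "h < n" "d * h \<le> n"
  shows "bij_betw (\<lambda>z j. int p ^ h * z j)
    {z \<in> residue_vecs m (int p ^ (n - h)). primitive_solution p m d k F (n - d * h) z}
    (sol_set p m d k F n h)"
proof -
  let ?scale = "\<lambda>z j. int p ^ h * z j"
  have "int p > 0" using assms(1) prime_gt_0_nat by auto
  then have "inj ?scale"
    by (auto simp: inj_on_def fun_eq_iff)
  have "x \<in> ?scale ` {z. ?scale z \<in> sol_set p m d k F n h}"
    if x: "x \<in> sol_set p m d k F n h" for x
  proof -
    have "int p ^ h dvd x j" for j
      using x Min_padic_val_mod_eq_iff[OF assms(1-3)]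
      by (cases "j < m") (auto simp: mem_sol_set_iff residue_vecs_def)
    then have "x = ?scale (\<lambda>j. x j div int p ^ h)"
      by simp
    then show ?thesis
      using x by (intro image_eqI) auto
  qed
  then have onto: "?scale ` {z. ?scale z \<in> sol_set p m d k F n h} = sol_set p m d k F n h"
    by auto
  have "{z \<in> residue_vecs m (int p ^ (n - h)). primitive_solution p m d k F (n - d * h) z} =
      {z. ?scale z \<in> sol_set p m d k F n h}"
    using scaled_mem_sol_set_iff[OF assms] by auto
  then show ?thesis
    unfolding bij_betw_def using inj_on_subset[OF \<open>inj ?scale\<close> subset_UNIV] onto by blast
qed

theorem lemma5p1:
  fixes n p d k m h :: nat and F :: "nat \<Rightarrow> (nat \<Rightarrow> nat) \<Rightarrow> int"
  assumes "prime p" and "m \<ge> 1" and "real h < real n / real d"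
  shows "card (sol_set p m d k F n h) = p ^ ((d - 1) * h * m) * card (sol_set p m d k F (n - d * h) 0)"
proof -
  have "d \<noteq> 0" \<comment> \<open>for d = 0 the hypothesis reads h < 0, as n / 0 = 0\<close>
    using assms(3) by (cases "d = 0") auto
  then have "d * h < n"
    using assms(3) by (simp add: pos_less_divide_eq mult.commute flip: of_nat_mult)
  define N where "N = n - d * h"
  define Q where "Q = p ^ ((d - 1) * h)"
  have "h \<le> d * h" and "(d - 1) * h = d * h - h"
    using \<open>d \<noteq> 0\<close> by (simp_all add: diff_mult_distrib)
  then have "N \<ge> 1" and "h < n" and "n - h = N + (d - 1) * h"
    using \<open>d * h < n\<close> unfolding N_def by linarith+
  let ?prim = "primitive_solution p m d k F N"
  have "card (sol_set p m d k F n h) = card {z \<in> residue_vecs m (int p ^ (n - h)). ?prim z}"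
    using bij_betw_same_card[OF bij_betw_scale_sol_set[OF assms(1,2) \<open>h < n\<close>]] \<open>d * h < n\<close>
    by (simp add: N_def)
  also have "\<dots> = card {z \<in> residue_vecs m (int p ^ N * int Q). ?prim z}"
    by (simp add: \<open>n - h = N + (d - 1) * h\<close> Q_def power_add)
  also have "\<dots> = Q ^ m * card {z \<in> residue_vecs m (int p ^ N). ?prim z}"
    using assms(1) \<open>N \<ge> 1\<close> by (intro card_residue_vecs_mult primitive_solution_cong) (simp_all add: prime_gt_0_nat)
  also have "card {z \<in> residue_vecs m (int p ^ N). ?prim z} = card (sol_set p m d k F N 0)"
    using bij_betw_same_card[OF bij_betw_scale_sol_set[OF assms(1,2), of 0 N d k F]] \<open>N \<ge> 1\<close> by simp
  finally show ?thesis
    by (simp add: N_def Q_def power_mult)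
qed

end
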